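(* Let $S$ be a finite $p$-group, $\mathcal{A}$ a divisible $S$-algebra, and $\varphi:P\to Q$, $\psi:Q\to R$ isomorphisms of $\mathfrak{F}_S(\mathcal{A})$. If $u_\varphi\in\mathcal{A}(\varphi)$ is a twisted unit of $\varphi$ and $u_\psi\in\mathcal{A}(\psi)$ is a twisted unit of $\psi$, then $u_\psi u_\varphi\in\mathcal{A}(\psi\varphi)$ is a twisted unit of $\psi\varphi$.
   Context: $\mathcal{O}$ is a complete local noetherian domain with maximal ideal $\mathfrak{m}$ and algebraically closed residue field of characteristic $p$. An interior $S$-algebra is an $\mathcal{O}$-free finite-rank $\mathcal{O}$-algebra $\mathcal{A}$ with group homomorphism $S\to\mathcal{A}^\times$; it is bifree if it has an $\mathcal{O}$-basis $Y$ with $sY=Y=Ys$ ($s\in S$) on which left and right actions are free. For $P\le S$ and injective $\varphi:P\to S$, $\mathcal{A}(\varphi)$ is the Brauer quotient $\mathcal{A}^\Delta/(\mathfrak{m}\mathcal{A}^\Delta+\sum_{V<\Delta}\mathrm{tr}_V^\Delta\mathcal{A}^V)$ for $\Delta=\Delta(\varphi,P)=\{(\varphi(p),p)\}\le S\times S$ acting by $(s,t)a=sat^{-1}$, with quotient map $\mathrm{br}_\varphi$; $\mathcal{A}(P)=\mathcal{A}(\iota_P)$. Multiplication induces $\mathcal{A}(\psi)\times\mathcal{A}(\varphi)\to\mathcal{A}(\psi\varphi)$, $\mathrm{br}_\psi(a)\mathrm{br}_\varphi(c)=\mathrm{br}_{\psi\varphi}(ac)$. $\mathfrak{F}_S(\mathcal{A})$: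 objects subgroups of $S$, $\mathrm{Hom}(P,Q)=\{\varphi:P\to Q$ injective$:\mathcal{A}(\varphi)\ne0\}$; $\mathcal{A}$ is divisible if it is bifree and $\mathfrak{F}_S(\mathcal{A})$ contains all inclusions, is closed under composition, and each morphism is an inclusion composed with an isomorphism of $\mathfrak{F}_S(\mathcal{A})$. For an isomorphism $\varphi:P\to Q$ of $\mathfrak{F}_S(\mathcal{A})$, a twisted unit of $\varphi$ is $u\in\mathcal{A}(\varphi)$ such that there is $u^\dagger\in\mathcal{A}(\varphi^{-1})$ with $u^\dagger u=1_{\mathcal{A}(P)}$. *)

theory Defs
  imports "HOL-Algebra.Group" "HOL-Algebra.Coset" "HOL-Computational_Algebra.Primes"
begin

text \<open>The maximal ideal of the local ring O is the set of non-units.\<close>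
definition nonunits :: "'r::comm_ring_1 set" where
  "nonunits = {r. \<not> r dvd 1}"

inductive_set ideal_span :: "'r::comm_ring_1 set \<Rightarrow> 'r set" for X where
  zero: "0 \<in> ideal_span X"
| gen: "x \<in> X \<Longrightarrow> r * x \<in> ideal_span X"
| add: "x \<in> ideal_span X \<Longrightarrow> y \<in> ideal_span X \<Longrightarrow> x + y \<in> ideal_span X"

primrec mpow :: "nat \<Rightarrow> 'r::comm_ring_1 set" where
  "mpow 0 = UNIV"
| "mpow (Suc k) = ideal_span {a * b | a b. a \<in> nonunits \<and> b \<in> mpow k}"

definition is_ideal :: "'r::comm_ring_1 set \<Rightarrow> bool" where
  "is_ideal I \<longleftrightarrow> 0 \<in> I \<and> (\<forall>x\<in>I. \<forall>y\<in>I. x + y \<in> I) \<and> (\<forall>r. \<forall>x\<in>I. r * x \<in> I)"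

text \<open>O is a complete local noetherian domain whose residue field O/m is algebraically
  closed of characteristic p.\<close>
definition CLN_domain :: "nat \<Rightarrow> 'r::idom itself \<Rightarrow> bool" where
  "CLN_domain p _ \<longleftrightarrow>
     is_ideal (nonunits :: 'r set)
   \<and> (\<forall>I::'r set. is_ideal I \<longrightarrow> (\<exists>F. finite F \<and> I = ideal_span F))
   \<and> (\<forall>x::nat \<Rightarrow> 'r. (\<forall>k. \<exists>N. \<forall>n\<ge>N. x n - x N \<in> mpow k)
          \<longrightarrow> (\<exists>L. \<forall>k. \<exists>N. \<forall>n\<ge>N. x n - L \<in> mpow k))
   \<and> (\<forall>n::nat. n \<ge> 1 \<longrightarrow> (\<forall>c::nat \<Rightarrow> 'r. \<exists>x. x ^ n + (\<Sum>i<n. c i * x ^ i) \<in> nonunits))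
   \<and> prime p \<and> (of_nat p :: 'r) \<in> nonunits"

definition O_algebra :: "('r::comm_ring_1 \<Rightarrow> 'a::ring_1 \<Rightarrow> 'a) \<Rightarrow> bool" where
  "O_algebra sm \<longleftrightarrow>
     (\<forall>r a b. sm r (a + b) = sm r a + sm r b)
   \<and> (\<forall>r s a. sm (r + s) a = sm r a + sm s a)
   \<and> (\<forall>r s a. sm (r * s) a = sm r (sm s a))
   \<and> (\<forall>a. sm 1 a = a)
   \<and> (\<forall>r a b. sm r (a * b) = sm r a * b \<and> sm r (a * b) = a * sm r b)"

definition is_basis :: "('r::comm_ring_1 \<Rightarrow> 'a::ring_1 \<Rightarrow> 'a) \<Rightarrow> 'a set \<Rightarrow> bool" where
  "is_basis sm Y \<longleftrightarrow> finite Y \<and>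
     (\<forall>a. \<exists>!c. (\<forall>y. y \<notin> Y \<longrightarrow> c y = 0) \<and> a = (\<Sum>y\<in>Y. sm (c y) y))"

definition interior_alg ::
  "('g, 'b) monoid_scheme \<Rightarrow> ('g \<Rightarrow> 'a::ring_1) \<Rightarrow> ('r::comm_ring_1 \<Rightarrow> 'a \<Rightarrow> 'a) \<Rightarrow> bool" where
  "interior_alg S \<eta> sm \<longleftrightarrow> O_algebra sm \<and> (\<exists>Y. is_basis sm Y)
     \<and> (\<forall>s\<in>carrier S. \<forall>t\<in>carrier S. \<eta> (s \<otimes>\<^bsub>S\<^esub> t) = \<eta> s * \<eta> t)
     \<and> \<eta> \<one>\<^bsub>S\<^esub> = 1"

definition bifree ::
  "('g, 'b) monoid_scheme \<Rightarrow> ('g \<Rightarrow> 'a::ring_1) \<Rightarrow> ('r::comm_ring_1 \<Rightarrow> 'a \<Rightarrow> 'a) \<Rightarrow> bool" where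
  "bifree S \<eta> sm \<longleftrightarrow> interior_alg S \<eta> sm \<and>
     (\<exists>Y. is_basis sm Y \<and>
        (\<forall>s\<in>carrier S. (\<lambda>y. \<eta> s * y) ` Y = Y \<and> (\<lambda>y. y * \<eta> s) ` Y = Y) \<and>
        (\<forall>s\<in>carrier S. \<forall>y\<in>Y. \<eta> s * y = y \<longrightarrow> s = \<one>\<^bsub>S\<^esub>) \<and>
        (\<forall>s\<in>carrier S. \<forall>y\<in>Y. y * \<eta> s = y \<longrightarrow> s = \<one>\<^bsub>S\<^esub>))"

definition act :: "('g, 'b) monoid_scheme \<Rightarrow> ('g \<Rightarrow> 'a::ring_1) \<Rightarrow> 'g \<times> 'g \<Rightarrow> 'a \<Rightarrow> 'a" where
  "act S \<eta> g a = \<eta> (fst g) * a * \<eta> (inv\<^bsub>S\<^esub> (snd g))"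

definition Delta :: "('g \<Rightarrow> 'g) \<Rightarrow> 'g set \<Rightarrow> ('g \<times> 'g) set" where
  "Delta \<phi> P = {(\<phi> x, x) | x. x \<in> P}"

definition fixpts :: "('g, 'b) monoid_scheme \<Rightarrow> ('g \<Rightarrow> 'a::ring_1) \<Rightarrow> ('g \<times> 'g) set \<Rightarrow> 'a set" where
  "fixpts S \<eta> V = {a. \<forall>g\<in>V. act S \<eta> g a = a}"

definition trace :: "('g, 'b) monoid_scheme \<Rightarrow> ('g \<Rightarrow> 'a::ring_1)
    \<Rightarrow> ('g \<times> 'g) set \<Rightarrow> ('g \<times> 'g) set \<Rightarrow> 'a \<Rightarrow> 'a" where
  "trace S \<eta> D V a = (\<Sum>C\<in>(\<lambda>g. g <#\<^bsub>S \<times>\<times> S\<^esub> V) ` D. act S \<eta> (SOME g. g \<in> C) a)"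

text \<open>The kernel m A^D + sum_{V<D} tr_V^D(A^V) of the Brauer quotient map.\<close>
inductive_set bker :: "('g, 'b) monoid_scheme \<Rightarrow> ('g \<Rightarrow> 'a::ring_1) \<Rightarrow> ('r::comm_ring_1 \<Rightarrow> 'a \<Rightarrow> 'a)
    \<Rightarrow> ('g \<times> 'g) set \<Rightarrow> 'a set" for S \<eta> sm D where
  zero: "0 \<in> bker S \<eta> sm D"
| mA: "r \<in> nonunits \<Longrightarrow> a \<in> fixpts S \<eta> D \<Longrightarrow> sm r a \<in> bker S \<eta> sm D"
| tr: "subgroup V (S \<times>\<times> S) \<Longrightarrow> V \<subset> D \<Longrightarrow> b \<in> fixpts S \<eta> V \<Longrightarrow> trace S \<eta> D V b \<in> bker S \<eta> sm D"
| add: "x \<in> bker S \<eta> sm D \<Longrightarrow> y \<in> bker S \<eta> sm D \<Longrightarrow> x + y \<in> bker S \<eta> sm D"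
| neg: "x \<in> bker S \<eta> sm D \<Longrightarrow> - x \<in> bker S \<eta> sm D"

text \<open>Elements of the Brauer quotient are cosets; br is the quotient map.\<close>
definition br :: "('g, 'b) monoid_scheme \<Rightarrow> ('g \<Rightarrow> 'a::ring_1) \<Rightarrow> ('r::comm_ring_1 \<Rightarrow> 'a \<Rightarrow> 'a)
    \<Rightarrow> ('g \<times> 'g) set \<Rightarrow> 'a \<Rightarrow> 'a set" where
  "br S \<eta> sm D a = (\<lambda>k. a + k) ` bker S \<eta> sm D"

definition BQ :: "('g, 'b) monoid_scheme \<Rightarrow> ('g \<Rightarrow> 'a::ring_1) \<Rightarrow> ('r::comm_ring_1 \<Rightarrow> 'a \<Rightarrow> 'a)
    \<Rightarrow> ('g \<Rightarrow> 'g) \<Rightarrow> 'g set \<Rightarrow> 'a set set" where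
  "BQ S \<eta> sm \<phi> P = br S \<eta> sm (Delta \<phi> P) ` fixpts S \<eta> (Delta \<phi> P)"

definition BQ_nonzero :: "('g, 'b) monoid_scheme \<Rightarrow> ('g \<Rightarrow> 'a::ring_1) \<Rightarrow> ('r::comm_ring_1 \<Rightarrow> 'a \<Rightarrow> 'a)
    \<Rightarrow> ('g \<Rightarrow> 'g) \<Rightarrow> 'g set \<Rightarrow> bool" where
  "BQ_nonzero S \<eta> sm \<phi> P \<longleftrightarrow> \<not> fixpts S \<eta> (Delta \<phi> P) \<subseteq> bker S \<eta> sm (Delta \<phi> P)"

text \<open>Product A(psi) x A(phi) -> A(psi phi), br_psi(a) br_phi(c) = br_{psi phi}(a c),
  where phi has domain P.\<close>
definition bmul :: "('g, 'b) monoid_scheme \<Rightarrow> ('g \<Rightarrow> 'a::ring_1) \<Rightarrow> ('r::comm_ring_1 \<Rightarrow> 'a \<Rightarrow> 'a)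
    \<Rightarrow> ('g \<Rightarrow> 'g) \<Rightarrow> ('g \<Rightarrow> 'g) \<Rightarrow> 'g set \<Rightarrow> 'a set \<Rightarrow> 'a set \<Rightarrow> 'a set" where
  "bmul S \<eta> sm \<psi> \<phi> P u w = br S \<eta> sm (Delta (\<psi> \<circ> \<phi>) P) ((SOME a. a \<in> u) * (SOME c. c \<in> w))"

definition bone :: "('g, 'b) monoid_scheme \<Rightarrow> ('g \<Rightarrow> 'a::ring_1) \<Rightarrow> ('r::comm_ring_1 \<Rightarrow> 'a \<Rightarrow> 'a)
    \<Rightarrow> 'g set \<Rightarrow> 'a set" where
  "bone S \<eta> sm P = br S \<eta> sm (Delta id P) 1"

definition Fmor :: "('g, 'b) monoid_scheme \<Rightarrow> ('g \<Rightarrow> 'a::ring_1) \<Rightarrow> ('r::comm_ring_1 \<Rightarrow> 'a \<Rightarrow> 'a)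
    \<Rightarrow> 'g set \<Rightarrow> 'g set \<Rightarrow> ('g \<Rightarrow> 'g) \<Rightarrow> bool" where
  "Fmor S \<eta> sm P Q \<phi> \<longleftrightarrow> subgroup P S \<and> subgroup Q S
     \<and> \<phi> \<in> hom (S\<lparr>carrier := P\<rparr>) S \<and> inj_on \<phi> P \<and> \<phi> ` P \<subseteq> Q
     \<and> BQ_nonzero S \<eta> sm \<phi> P"

definition Fiso :: "('g, 'b) monoid_scheme \<Rightarrow> ('g \<Rightarrow> 'a::ring_1) \<Rightarrow> ('r::comm_ring_1 \<Rightarrow> 'a \<Rightarrow> 'a)
    \<Rightarrow> 'g set \<Rightarrow> 'g set \<Rightarrow> ('g \<Rightarrow> 'g) \<Rightarrow> bool" where
  "Fiso S \<eta> sm P Q \<phi> \<longleftrightarrow> Fmor S \<eta> sm P Q \<phi> \<and> \<phi> ` P = Q \<and> Fmor S \<eta> sm Q P (inv_into P \<phi>)"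

definition divisible :: "('g, 'b) monoid_scheme \<Rightarrow> ('g \<Rightarrow> 'a::ring_1) \<Rightarrow> ('r::comm_ring_1 \<Rightarrow> 'a \<Rightarrow> 'a) \<Rightarrow> bool" where
  "divisible S \<eta> sm \<longleftrightarrow> bifree S \<eta> sm
     \<and> (\<forall>P Q. subgroup P S \<and> subgroup Q S \<and> P \<subseteq> Q \<longrightarrow> Fmor S \<eta> sm P Q id)
     \<and> (\<forall>P Q R \<phi> \<psi>. Fmor S \<eta> sm P Q \<phi> \<and> Fmor S \<eta> sm Q R \<psi> \<longrightarrow> Fmor S \<eta> sm P R (\<psi> \<circ> \<phi>))
     \<and> (\<forall>P Q \<phi>. Fmor S \<eta> sm P Q \<phi> \<longrightarrow> (\<exists>Q'. Q' \<subseteq> Q \<and> Fiso S \<eta> sm P Q' \<phi>))"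

definition twisted_unit :: "('g, 'b) monoid_scheme \<Rightarrow> ('g \<Rightarrow> 'a::ring_1) \<Rightarrow> ('r::comm_ring_1 \<Rightarrow> 'a \<Rightarrow> 'a)
    \<Rightarrow> 'g set \<Rightarrow> ('g \<Rightarrow> 'g) \<Rightarrow> 'a set \<Rightarrow> bool" where
  "twisted_unit S \<eta> sm P \<phi> u \<longleftrightarrow> u \<in> BQ S \<eta> sm \<phi> P \<and>
     (\<exists>v \<in> BQ S \<eta> sm (inv_into P \<phi>) (\<phi> ` P).
        bmul S \<eta> sm (inv_into P \<phi>) \<phi> P v u = bone S \<eta> sm P)"

end

theory Submission
  imports Defs "HOL-Algebra.Left_Coset"
begin

text \<open>Multiplication in \<open>A\<close> descends to Brauer quotients. Left multiplication by a
  \<open>\<Delta>(f, Q)\<close>-fixed element, resp. right multiplication by a \<open>\<Delta>(g, P)\<close>-fixed element, intertwines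
  the actions of diagonal subgroups along the isomorphisms \<open>(g x, x) \<mapsto> (f (g x), x)\<close>,
  resp. \<open>(f y, y) \<mapsto> (f y, g\<^sup>-\<^sup>1 y)\<close>, and an intertwining additive map carries
  \<open>m A\<^sup>D\<close> and the relative traces \<open>tr\<^sub>V\<^sup>D\<close> into the corresponding pieces of the Brauer kernel
  of the image subgroup. Hence products of Brauer quotients are computed on arbitrary representatives,
  and if \<open>c' c - 1\<close> and \<open>a' a - 1\<close> lie in the Brauer kernels of \<open>\<Delta>(id, P)\<close> and \<open>\<Delta>(id, Q)\<close>,
  then so does \<open>(c' a')(a c) - 1 = c' (a' a - 1) c + (c' c - 1)\<close>.\<close>

lemma l_coset_eq_image: "a <#\<^bsub>G\<^esub> H = (\<lambda>h. a \<otimes>\<^bsub>G\<^esub> h) ` H"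
  by (auto simp: l_coset_def)

lemma l_coset_subset_subgroup: "subgroup D G \<Longrightarrow> V \<subseteq> D \<Longrightarrow> g \<in> D \<Longrightarrow> g <#\<^bsub>G\<^esub> V \<subseteq> D"
  unfolding l_coset_eq_image by (auto intro: subgroup.m_closed)

lemma subgroup_left_mult_bij:
  assumes "group G" "subgroup D G" "h \<in> D"
  shows "bij_betw (\<lambda>g. h \<otimes>\<^bsub>G\<^esub> g) D D"
proof -
  interpret D: group "G\<lparr>carrier := D\<rparr>" using assms by (simp add: subgroup.subgroup_is_group)
  show ?thesis using D.inj_on_cmult[of h] D.surj_const_mult[of h] assms(3) by (simp add: bij_betw_def)
qed

lemma hom_restrict_carrier_mono:
  "h \<in> hom (G\<lparr>carrier := D\<rparr>) H \<Longrightarrow> V \<subseteq> D \<Longrightarrow> h \<in> hom (G\<lparr>carrier := V\<rparr>) H"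
  by (auto simp: hom_def)

lemma subgroup_image_hom:
  assumes "group H" "group K" "subgroup V H" "\<theta> \<in> hom (H\<lparr>carrier := V\<rparr>) K"
  shows "subgroup (\<theta> ` V) K"
proof -
  have "group_hom (H\<lparr>carrier := V\<rparr>) K \<theta>"
    using assms by (simp add: group_hom_def group_hom_axioms_def subgroup.subgroup_is_group)
  then show ?thesis using group_hom.img_is_subgroup by fastforce
qed

lemma sum_cosets_transport:
  fixes F F' :: "'x \<Rightarrow> 'c::comm_monoid_add"
  assumes sub: "\<And>g. g \<in> D \<Longrightarrow> g <#\<^bsub>G\<^esub> V \<subseteq> D" and mem: "\<And>g. g \<in> D \<Longrightarrow> g \<in> g <#\<^bsub>G\<^esub> V"
    and bij: "bij_betw \<theta> D D'"
    and cos: "\<And>g. g \<in> D \<Longrightarrow> \<theta> ` (g <#\<^bsub>G\<^esub> V) = \<theta> g <#\<^bsub>G'\<^esub> V'"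
    and const: "\<And>g x. g \<in> D \<Longrightarrow> x \<in> g <#\<^bsub>G\<^esub> V \<Longrightarrow> F x = F g"
    and F': "\<And>g. g \<in> D \<Longrightarrow> F' (\<theta> g) = F g"
  shows "(\<Sum>C\<in>(\<lambda>g. g <#\<^bsub>G\<^esub> V) ` D. F (SOME x. x \<in> C))
       = (\<Sum>C\<in>(\<lambda>g. g <#\<^bsub>G'\<^esub> V') ` D'. F' (SOME x. x \<in> C))"
proof -
  let ?A = "(\<lambda>g. g <#\<^bsub>G\<^esub> V) ` D" and ?B = "(\<lambda>g. g <#\<^bsub>G'\<^esub> V') ` D'"
  have inj: "inj_on \<theta> D" and img: "\<theta> ` D = D'" using bij by (auto simp: bij_betw_def)
  have bij_cosets: "bij_betw (image \<theta>) ?A ?B"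
  proof (rule bij_betwI')
    fix X Y assume "X \<in> ?A" "Y \<in> ?A"
    then have "X \<subseteq> D" "Y \<subseteq> D" using sub by auto
    then show "(\<theta> ` X = \<theta> ` Y) = (X = Y)" using inj_on_image_eq_iff[OF inj] by blast
  next
    fix X assume "X \<in> ?A"
    then show "\<theta> ` X \<in> ?B" using cos img by auto
  next
    fix Y assume "Y \<in> ?B"
    then obtain g where "g \<in> D" "Y = \<theta> g <#\<^bsub>G'\<^esub> V'" using img by auto
    then show "\<exists>X\<in>?A. Y = \<theta> ` X" using cos by auto
  qed
  have "(\<Sum>C\<in>?B. F' (SOME x. x \<in> C)) = (\<Sum>C\<in>?A. F' (SOME x. x \<in> \<theta> ` C))"
    using sum.reindex_bij_betw[OF bij_cosets, of "\<lambda>C. F' (SOME x. x \<in> C)"] by simp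
  also have "\<dots> = (\<Sum>C\<in>?A. F (SOME x. x \<in> C))"
  proof (rule sum.cong[OF refl])
    fix C assume "C \<in> ?A"
    then obtain g where g: "g \<in> D" "C = g <#\<^bsub>G\<^esub> V" by auto
    have "(SOME x. x \<in> C) \<in> C" using mem g by (metis someI)
    then have "F (SOME x. x \<in> C) = F g" using const g by auto
    moreover have "(SOME x. x \<in> \<theta> ` C) \<in> \<theta> ` C" using mem g by (meson imageI someI)
    then obtain y where "y \<in> C" "(SOME x. x \<in> \<theta> ` C) = \<theta> y" by auto
    moreover have "y \<in> D" using sub g \<open>y \<in> C\<close> by auto
    ultimately show "F' (SOME x. x \<in> \<theta> ` C) = F (SOME x. x \<in> C)" using F' const g by simp
  qed
  finally show ?thesis by simp
qed

lemma Delta_eq_image: "Delta f P = (\<lambda>x. (f x, x)) ` P"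
  by (auto simp: Delta_def)

lemma Delta_cong: "(\<And>x. x \<in> P \<Longrightarrow> f x = g x) \<Longrightarrow> Delta f P = Delta g P"
  unfolding Delta_eq_image by auto

definition subgroup_iso :: "('g, 'b) monoid_scheme \<Rightarrow> 'g set \<Rightarrow> 'g set \<Rightarrow> ('g \<Rightarrow> 'g) \<Rightarrow> bool" where
  "subgroup_iso S P Q \<phi> \<longleftrightarrow>
     subgroup P S \<and> subgroup Q S \<and> \<phi> \<in> hom (S\<lparr>carrier := P\<rparr>) S \<and> bij_betw \<phi> P Q"

lemma Fiso_imp_subgroup_iso: "Fiso S \<eta> sm P Q \<phi> \<Longrightarrow> subgroup_iso S P Q \<phi>"
  by (auto simp: Fiso_def Fmor_def subgroup_iso_def bij_betw_def)

lemma hom_restrict_id: "subgroup Q S \<Longrightarrow> id \<in> hom (S\<lparr>carrier := Q\<rparr>) S"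
  by (auto simp: hom_def subgroup.mem_carrier)

lemma hom_restrict_comp:
  "\<phi> \<in> hom (S\<lparr>carrier := P\<rparr>) S \<Longrightarrow> \<phi> ` P \<subseteq> Q \<Longrightarrow> \<psi> \<in> hom (S\<lparr>carrier := Q\<rparr>) S
    \<Longrightarrow> \<psi> \<circ> \<phi> \<in> hom (S\<lparr>carrier := P\<rparr>) S"
  by (auto simp: hom_def Pi_def image_subset_iff)

lemma subgroup_iso_comp:
  "subgroup_iso S P Q \<phi> \<Longrightarrow> subgroup_iso S Q R \<psi> \<Longrightarrow> subgroup_iso S P R (\<psi> \<circ> \<phi>)"
  unfolding subgroup_iso_def
  by (metis bij_betw_def bij_betw_trans hom_restrict_comp order_refl)

lemma subgroup_iso_inv:
  assumes "subgroup_iso S P Q \<phi>"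
  shows "subgroup_iso S Q P (inv_into P \<phi>)"
proof -
  have P: "subgroup P S" and hom: "\<phi> \<in> hom (S\<lparr>carrier := P\<rparr>) S" and bij: "bij_betw \<phi> P Q"
    using assms by (auto simp: subgroup_iso_def)
  have inv: "inv_into P \<phi> y \<in> P" "\<phi> (inv_into P \<phi> y) = y" if "y \<in> Q" for y
    using bij that by (auto simp: bij_betw_def inv_into_into f_inv_into_f)
  have "inv_into P \<phi> (y \<otimes>\<^bsub>S\<^esub> z) = inv_into P \<phi> y \<otimes>\<^bsub>S\<^esub> inv_into P \<phi> z" if "y \<in> Q" "z \<in> Q" for y z
  proof (rule inv_into_f_eq)
    show "inj_on \<phi> P" using bij by (simp add: bij_betw_def)
    show "inv_into P \<phi> y \<otimes>\<^bsub>S\<^esub> inv_into P \<phi> z \<in> P" using inv that P by (simp add: subgroup.m_closed)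
    show "\<phi> (inv_into P \<phi> y \<otimes>\<^bsub>S\<^esub> inv_into P \<phi> z) = y \<otimes>\<^bsub>S\<^esub> z"
      using hom inv that by (simp add: hom_def)
  qed
  then have "inv_into P \<phi> \<in> hom (S\<lparr>carrier := Q\<rparr>) S"
    using inv P by (auto simp: hom_def subgroup.mem_carrier)
  then show ?thesis using assms bij_betw_inv_into by (auto simp: subgroup_iso_def)
qed

lemma Delta_inv_into_comp:
  "subgroup_iso S P Q \<phi> \<Longrightarrow> Delta (inv_into P \<phi> \<circ> \<phi>) P = Delta id P"
  by (rule Delta_cong) (auto simp: subgroup_iso_def bij_betw_def)

lemma Delta_inv_into_comp_distrib:
  assumes "subgroup_iso S P Q \<phi>" "subgroup_iso S Q R \<psi>"
  shows "Delta (inv_into P (\<psi> \<circ> \<phi>)) R = Delta (inv_into P \<phi> \<circ> inv_into Q \<psi>) R"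
proof (rule Delta_cong)
  fix z assume "z \<in> R"
  with assms show "inv_into P (\<psi> \<circ> \<phi>) z = (inv_into P \<phi> \<circ> inv_into Q \<psi>) z"
    by (auto simp: subgroup_iso_def bij_betw_def inv_into_comp)
qed

locale interior_algebra =
  fixes S :: "('g, 'b) monoid_scheme" and \<eta> :: "'g \<Rightarrow> 'a::ring_1"
    and sm :: "'r::comm_ring_1 \<Rightarrow> 'a \<Rightarrow> 'a"
  assumes group: "group S" and O_algebra: "O_algebra sm"
    and eta_mult: "\<And>s t. s \<in> carrier S \<Longrightarrow> t \<in> carrier S \<Longrightarrow> \<eta> (s \<otimes>\<^bsub>S\<^esub> t) = \<eta> s * \<eta> t"
    and eta_one: "\<eta> \<one>\<^bsub>S\<^esub> = 1"
begin

abbreviation G where "G \<equiv> S \<times>\<times> S"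

lemma group_G: "group G"
  using group by (simp add: DirProd_group)

lemma eta_inv_mult: "s \<in> carrier S \<Longrightarrow> \<eta> (inv\<^bsub>S\<^esub> s) * \<eta> s = 1"
  by (metis eta_mult eta_one group group.inv_closed group.l_inv)

lemma sm_mult_left: "sm r (a * b) = sm r a * b"
  and sm_mult_right: "sm r (a * b) = a * sm r b"
  using O_algebra unfolding O_algebra_def by blast+

lemma act_mult:
  assumes "g \<in> carrier G" "h \<in> carrier G"
  shows "act S \<eta> (g \<otimes>\<^bsub>G\<^esub> h) a = act S \<eta> g (act S \<eta> h a)"
proof -
  obtain s t s' t' where gh: "g = (s, t)" "h = (s', t')" by (cases g, cases h) auto
  then have "s \<in> carrier S" "t \<in> carrier S" "s' \<in> carrier S" "t' \<in> carrier S" using assms by auto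
  moreover from this have "inv\<^bsub>S\<^esub> (t \<otimes>\<^bsub>S\<^esub> t') = inv\<^bsub>S\<^esub> t' \<otimes>\<^bsub>S\<^esub> inv\<^bsub>S\<^esub> t"
    using group by (simp add: group.inv_mult_group)
  ultimately show ?thesis using gh group
    by (simp add: act_def eta_mult group.inv_closed mult.assoc)
qed

lemma act_zero: "act S \<eta> g 0 = 0"
  and act_uminus: "act S \<eta> g (- a) = - act S \<eta> g a"
  and act_add: "act S \<eta> g (a + b) = act S \<eta> g a + act S \<eta> g b"
  by (simp_all add: act_def distrib_left distrib_right)

lemma act_sm: "act S \<eta> g (sm r a) = sm r (act S \<eta> g a)"
  unfolding act_def by (metis sm_mult_left sm_mult_right)

lemma act_sum: "act S \<eta> g (sum f A) = (\<Sum>x\<in>A. act S \<eta> g (f x))"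
  by (simp add: act_def sum_distrib_left sum_distrib_right)

lemma fixpts_add: "a \<in> fixpts S \<eta> D \<Longrightarrow> b \<in> fixpts S \<eta> D \<Longrightarrow> a + b \<in> fixpts S \<eta> D"
  by (simp add: fixpts_def act_add)

lemma act_l_coset:
  assumes "subgroup V G" "b \<in> fixpts S \<eta> V" "g \<in> carrier G" "x \<in> g <#\<^bsub>G\<^esub> V"
  shows "act S \<eta> x b = act S \<eta> g b"
proof -
  obtain v where v: "v \<in> V" "x = g \<otimes>\<^bsub>G\<^esub> v" using assms(4) by (auto simp: l_coset_eq_image)
  then have "act S \<eta> v b = b" using assms(2) by (simp add: fixpts_def)
  then show ?thesis using v act_mult[OF assms(3) subgroup.mem_carrier[OF assms(1) v(1)]] by simp
qed

lemma trace_in_fixpts: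
  assumes D: "subgroup D G" and V: "subgroup V G" "V \<subseteq> D" and b: "b \<in> fixpts S \<eta> V"
  shows "trace S \<eta> D V b \<in> fixpts S \<eta> D"
  unfolding fixpts_def
proof (intro CollectI ballI)
  interpret G: group G by (rule group_G)
  fix h assume h: "h \<in> D"
  have Dc: "D \<subseteq> carrier G" and Vc: "V \<subseteq> carrier G" using D V subgroup.subset by blast+
  have hc: "h \<in> carrier G" using h Dc by blast
  have bij: "bij_betw (\<lambda>g. h \<otimes>\<^bsub>G\<^esub> g) D D"
    using group_G D h by (rule subgroup_left_mult_bij)
  have "(\<Sum>C\<in>(\<lambda>g. g <#\<^bsub>G\<^esub> V) ` D. act S \<eta> h (act S \<eta> (SOME x. x \<in> C) b))
      = (\<Sum>C\<in>(\<lambda>g. g <#\<^bsub>G\<^esub> V) ` D. act S \<eta> (SOME x. x \<in> C) b)"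
  proof (rule sum_cosets_transport[where F="\<lambda>g. act S \<eta> h (act S \<eta> g b)"
        and F'="\<lambda>g. act S \<eta> g b", OF _ _ bij])
    fix g assume g: "g \<in> D"
    then have gc: "g \<in> carrier G" using Dc by blast
    show "g <#\<^bsub>G\<^esub> V \<subseteq> D" using D V(2) g by (rule l_coset_subset_subgroup)
    show "g \<in> g <#\<^bsub>G\<^esub> V" using G.lcos_self[OF gc V(1)] .
    show "(\<lambda>g. h \<otimes>\<^bsub>G\<^esub> g) ` (g <#\<^bsub>G\<^esub> V) = (h \<otimes>\<^bsub>G\<^esub> g) <#\<^bsub>G\<^esub> V"
      using G.lcos_m_assoc[OF Vc hc gc] by (simp only: l_coset_eq_image)
    show "act S \<eta> (h \<otimes>\<^bsub>G\<^esub> g) b = act S \<eta> h (act S \<eta> g b)" using act_mult[OF hc gc] .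
    show "act S \<eta> h (act S \<eta> x b) = act S \<eta> h (act S \<eta> g b)" if "x \<in> g <#\<^bsub>G\<^esub> V" for x
      using act_l_coset[OF V(1) b gc that] by simp
  qed
  then show "act S \<eta> h (trace S \<eta> D V b) = trace S \<eta> D V b" unfolding trace_def act_sum .
qed

lemma bker_subset_fixpts:
  assumes D: "subgroup D G"
  shows "bker S \<eta> sm D \<subseteq> fixpts S \<eta> D"
proof
  fix k assume "k \<in> bker S \<eta> sm D"
  then show "k \<in> fixpts S \<eta> D"
  proof (induction rule: bker.induct)
    case (tr V b)
    then show ?case using trace_in_fixpts[OF D tr(1) _ tr(3)] by blast
  qed (simp_all add: fixpts_def act_zero act_uminus act_add act_sm)
qed

lemma Delta_subgroup:
  assumes "subgroup P S" "f \<in> hom (S\<lparr>carrier := P\<rparr>) S"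
  shows "subgroup (Delta f P) G"
  unfolding Delta_eq_image
proof (rule subgroup_image_hom[OF group group_G assms(1)])
  show "(\<lambda>x. (f x, x)) \<in> hom (S\<lparr>carrier := P\<rparr>) G"
    using assms by (auto simp: hom_def subgroup.mem_carrier)
qed

lemma trace_transport:
  assumes D: "subgroup D G" and V: "subgroup V G" "V \<subseteq> D"
    and \<theta>: "\<theta> \<in> hom (G\<lparr>carrier := D\<rparr>) G" "inj_on \<theta> D"
    and M0: "M 0 = 0" and Madd: "\<And>x y. M (x + y) = M x + M y"
    and Mact: "\<And>d b. d \<in> D \<Longrightarrow> M (act S \<eta> d b) = act S \<eta> (\<theta> d) (M b)"
    and b: "b \<in> fixpts S \<eta> V"
  shows "M (trace S \<eta> D V b) = trace S \<eta> (\<theta> ` D) (\<theta> ` V) (M b)"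
proof -
  have Dc: "D \<subseteq> carrier G" using D subgroup.subset by blast
  have "M (trace S \<eta> D V b) = (\<Sum>C\<in>(\<lambda>g. g <#\<^bsub>G\<^esub> V) ` D. M (act S \<eta> (SOME x. x \<in> C) b))"
    unfolding trace_def
    using sum_comp_morphism[of M, OF M0 Madd, of "\<lambda>C. act S \<eta> (SOME x. x \<in> C) b"] by (simp add: comp_def)
  also have "\<dots> = trace S \<eta> (\<theta> ` D) (\<theta> ` V) (M b)"
    unfolding trace_def
  proof (rule sum_cosets_transport[where F="\<lambda>g. M (act S \<eta> g b)" and F'="\<lambda>g. act S \<eta> g (M b)"])
    fix g assume g: "g \<in> D"
    then have gc: "g \<in> carrier G" using Dc by blast
    show "g <#\<^bsub>G\<^esub> V \<subseteq> D" using D V(2) g by (rule l_coset_subset_subgroup)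
    show "g \<in> g <#\<^bsub>G\<^esub> V" using group.lcos_self[OF group_G gc V(1)] .
    have "\<theta> ` (g <#\<^bsub>G\<^esub> V) = (\<lambda>v. \<theta> g \<otimes>\<^bsub>G\<^esub> \<theta> v) ` V"
      unfolding l_coset_eq_image image_image using \<theta>(1) g V(2) by (intro image_cong) (auto simp: hom_def)
    then show "\<theta> ` (g <#\<^bsub>G\<^esub> V) = \<theta> g <#\<^bsub>G\<^esub> \<theta> ` V" by (simp add: l_coset_eq_image image_image)
    show "act S \<eta> (\<theta> g) (M b) = M (act S \<eta> g b)" using Mact[OF g] by simp
    show "M (act S \<eta> x b) = M (act S \<eta> g b)" if "x \<in> g <#\<^bsub>G\<^esub> V" for x
      using act_l_coset[OF V(1) b gc that] by simp
  qed (use \<theta> in \<open>auto simp: bij_betw_def\<close>)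
  finally show ?thesis .
qed

lemma bker_transport:
  assumes D: "subgroup D G" and \<theta>: "\<theta> \<in> hom (G\<lparr>carrier := D\<rparr>) G" "inj_on \<theta> D"
    and Madd: "\<And>x y. M (x + y) = M x + M y" and Msm: "\<And>r a. M (sm r a) = sm r (M a)"
    and Mact: "\<And>d b. d \<in> D \<Longrightarrow> M (act S \<eta> d b) = act S \<eta> (\<theta> d) (M b)"
    and k: "k \<in> bker S \<eta> sm D"
  shows "M k \<in> bker S \<eta> sm (\<theta> ` D)"
proof -
  have M0: "M 0 = 0" using Madd[of 0 0] by simp
  have Mneg: "M (- x) = - M x" for x
    using Madd[of x "- x"] M0 minus_unique[of "M x" "M (- x)"] by simp
  have M_fixpts: "M b \<in> fixpts S \<eta> (\<theta> ` V)" if "b \<in> fixpts S \<eta> V" "V \<subseteq> D" for b V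
    unfolding fixpts_def
  proof (intro CollectI ballI)
    fix e assume "e \<in> \<theta> ` V"
    then obtain d where "d \<in> V" "e = \<theta> d" by blast
    then show "act S \<eta> e (M b) = M b" using that Mact[of d b] by (auto simp: fixpts_def)
  qed
  from k show ?thesis
  proof (induction rule: bker.induct)
    case zero
    then show ?case using M0 bker.zero by simp
  next
    case (mA r a)
    then show ?case using bker.mA M_fixpts[of a D] Msm by simp
  next
    case (tr V b)
    then have VD: "V \<subseteq> D" by blast
    have "subgroup (\<theta> ` V) G"
      using subgroup_image_hom[OF group_G group_G tr(1) hom_restrict_carrier_mono[OF \<theta>(1) VD]] .
    moreover have "\<theta> ` V \<subset> \<theta> ` D" using inj_on_image_eq_iff[OF \<theta>(2)] tr(2) by blast
    ultimately have "trace S \<eta> (\<theta> ` D) (\<theta> ` V) (M b) \<in> bker S \<eta> sm (\<theta> ` D)"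
      using M_fixpts[OF tr(3) VD] by (rule bker.tr)
    then show ?case using trace_transport[OF D tr(1) VD \<theta> M0 Madd Mact tr(3)] by simp
  next
    case (add x y)
    then show ?case by (simp add: Madd bker.add)
  next
    case (neg x)
    then show ?case by (simp add: Mneg bker.neg)
  qed
qed

lemma fixpts_Delta_commute:
  assumes Q: "subgroup Q S" "f \<in> hom (S\<lparr>carrier := Q\<rparr>) S"
    and a: "a \<in> fixpts S \<eta> (Delta f Q)" and y: "y \<in> Q"
  shows "a * \<eta> y = \<eta> (f y) * a" and "\<eta> (inv\<^bsub>S\<^esub> (f y)) * a = a * \<eta> (inv\<^bsub>S\<^esub> y)"
proof -
  have fixed: "\<eta> (f y) * a * \<eta> (inv\<^bsub>S\<^esub> y) = a"
    using a y by (auto simp: fixpts_def Delta_def act_def)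
  have "y \<in> carrier S" "f y \<in> carrier S" using Q y by (auto simp: hom_def subgroup.mem_carrier)
  then have "\<eta> (inv\<^bsub>S\<^esub> y) * \<eta> y = 1" "\<eta> (inv\<^bsub>S\<^esub> (f y)) * \<eta> (f y) = 1"
    by (simp_all add: eta_inv_mult)
  moreover have "a * \<eta> y = \<eta> (f y) * a * (\<eta> (inv\<^bsub>S\<^esub> y) * \<eta> y)"
    and "\<eta> (inv\<^bsub>S\<^esub> (f y)) * a = (\<eta> (inv\<^bsub>S\<^esub> (f y)) * \<eta> (f y)) * a * \<eta> (inv\<^bsub>S\<^esub> y)"
    by (subst (1) fixed[symmetric], simp only: mult.assoc)+
  ultimately show "a * \<eta> y = \<eta> (f y) * a" and "\<eta> (inv\<^bsub>S\<^esub> (f y)) * a = a * \<eta> (inv\<^bsub>S\<^esub> y)"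
    by simp_all
qed

lemma fixpts_Delta_mult:
  assumes Q: "subgroup Q S" "f \<in> hom (S\<lparr>carrier := Q\<rparr>) S"
    and a: "a \<in> fixpts S \<eta> (Delta f Q)" and c: "c \<in> fixpts S \<eta> (Delta g P)" and gP: "g ` P \<subseteq> Q"
  shows "a * c \<in> fixpts S \<eta> (Delta (f \<circ> g) P)"
  unfolding fixpts_def
proof (intro CollectI ballI)
  fix d assume "d \<in> Delta (f \<circ> g) P"
  then obtain x where x: "x \<in> P" "d = (f (g x), x)" by (auto simp: Delta_def)
  have "act S \<eta> d (a * c) = \<eta> (f (g x)) * a * c * \<eta> (inv\<^bsub>S\<^esub> x)"
    using x by (simp add: act_def mult.assoc)
  also have "\<dots> = a * (\<eta> (g x) * c * \<eta> (inv\<^bsub>S\<^esub> x))"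
    using fixpts_Delta_commute(1)[OF Q a, of "g x", symmetric] x gP by (auto simp: mult.assoc[symmetric])
  also have "\<dots> = a * c" using c x by (auto simp: fixpts_def Delta_def act_def)
  finally show "act S \<eta> d (a * c) = a * c" .
qed


lemma bker_mult_left:
  assumes P: "subgroup P S" "g \<in> hom (S\<lparr>carrier := P\<rparr>) S"
    and Q: "subgroup Q S" "f \<in> hom (S\<lparr>carrier := Q\<rparr>) S" and gP: "g ` P \<subseteq> Q"
    and a: "a \<in> fixpts S \<eta> (Delta f Q)" and k: "k \<in> bker S \<eta> sm (Delta g P)"
  shows "a * k \<in> bker S \<eta> sm (Delta (f \<circ> g) P)"
proof -
  let ?\<theta> = "\<lambda>d. (f (fst d), snd d)"
  have "a * k \<in> bker S \<eta> sm (?\<theta> ` Delta g P)"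
  proof (rule bker_transport[OF Delta_subgroup[OF P] _ _ _ _ _ k])
    show "?\<theta> \<in> hom (G\<lparr>carrier := Delta g P\<rparr>) G"
      using P Q gP by (auto simp: hom_def Delta_eq_image subgroup.mem_carrier image_subset_iff)
    show "inj_on ?\<theta> (Delta g P)" by (auto simp: Delta_eq_image inj_on_def)
    show "a * act S \<eta> d b = act S \<eta> (?\<theta> d) (a * b)" if "d \<in> Delta g P" for d b
    proof -
      obtain x where x: "x \<in> P" "d = (g x, x)" using \<open>d \<in> Delta g P\<close> by (auto simp: Delta_def)
      then have "a * \<eta> (g x) = \<eta> (f (g x)) * a" using fixpts_Delta_commute(1)[OF Q a] gP by blast
      then show ?thesis using x by (simp add: act_def mult.assoc[symmetric])
    qed
  qed (simp_all add: distrib_left sm_mult_right)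
  moreover have "?\<theta> ` Delta g P = Delta (f \<circ> g) P" by (simp add: Delta_eq_image image_image)
  ultimately show ?thesis by simp
qed

lemma bker_mult_right:
  assumes g: "subgroup_iso S P Q g" and f: "f \<in> hom (S\<lparr>carrier := Q\<rparr>) S"
    and c: "c \<in> fixpts S \<eta> (Delta g P)" and k: "k \<in> bker S \<eta> sm (Delta f Q)"
  shows "k * c \<in> bker S \<eta> sm (Delta (f \<circ> g) P)"
proof -
  let ?g' = "inv_into P g"
  let ?\<theta> = "\<lambda>d. (fst d, ?g' (snd d))"
  have P: "subgroup P S" "g \<in> hom (S\<lparr>carrier := P\<rparr>) S" and Q: "subgroup Q S"
    and g': "?g' \<in> hom (S\<lparr>carrier := Q\<rparr>) S"
    and bij: "bij_betw g P Q" and bij': "bij_betw ?g' Q P"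
    using g subgroup_iso_inv[OF g] by (auto simp: subgroup_iso_def)
  have "k * c \<in> bker S \<eta> sm (?\<theta> ` Delta f Q)"
  proof (rule bker_transport[OF Delta_subgroup[OF Q f] _ _ _ _ _ k])
    show "?\<theta> \<in> hom (G\<lparr>carrier := Delta f Q\<rparr>) G"
      using f g' bij' Q by (auto simp: hom_def Delta_eq_image subgroup.mem_carrier bij_betw_def)
    show "inj_on ?\<theta> (Delta f Q)"
      using bij' by (auto simp: Delta_eq_image inj_on_def bij_betw_def)
    show "act S \<eta> d b * c = act S \<eta> (?\<theta> d) (b * c)" if "d \<in> Delta f Q" for d b
    proof -
      obtain y where y: "y \<in> Q" "d = (f y, y)" using \<open>d \<in> Delta f Q\<close> by (auto simp: Delta_def)
      then have "?g' y \<in> P" "g (?g' y) = y" using bij by (auto simp: bij_betw_def inv_into_into f_inv_into_f)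
      then have "\<eta> (inv\<^bsub>S\<^esub> y) * c = c * \<eta> (inv\<^bsub>S\<^esub> (?g' y))"
        using fixpts_Delta_commute(2)[OF P c] by metis
      then show ?thesis using y by (simp add: act_def mult.assoc)
    qed
  qed (simp_all add: distrib_right sm_mult_left)
  moreover have "?\<theta> ` Delta f Q = Delta (f \<circ> g) P"
    using bij by (auto simp: Delta_eq_image bij_betw_def image_iff)
  ultimately show ?thesis by simp
qed

lemma br_eq_iff: "br S \<eta> sm D x = br S \<eta> sm D y \<longleftrightarrow> x - y \<in> bker S \<eta> sm D"
proof
  assume "br S \<eta> sm D x = br S \<eta> sm D y"
  then have "x \<in> (\<lambda>k. y + k) ` bker S \<eta> sm D"
    using bker.zero unfolding br_def by (metis add.right_neutral image_eqI)
  then show "x - y \<in> bker S \<eta> sm D" by auto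
next
  assume xy: "x - y \<in> bker S \<eta> sm D"
  have "x + k = y + ((x - y) + k)" "y + k = x + (- (x - y) + k)" for k :: 'a by simp_all
  then show "br S \<eta> sm D x = br S \<eta> sm D y"
    unfolding br_def using bker.add[OF xy] bker.add[OF bker.neg[OF xy]] by blast
qed

lemma some_br: "\<exists>k \<in> bker S \<eta> sm D. (SOME x. x \<in> br S \<eta> sm D a) = a + k"
proof -
  have "a \<in> br S \<eta> sm D a" unfolding br_def using bker.zero by (metis add.right_neutral image_eqI)
  then have "(SOME x. x \<in> br S \<eta> sm D a) \<in> br S \<eta> sm D a" by (rule someI)
  then show ?thesis unfolding br_def by blast
qed

lemma bmul_br:
  assumes g: "subgroup_iso S P Q g" and f: "f \<in> hom (S\<lparr>carrier := Q\<rparr>) S"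
    and a: "a \<in> fixpts S \<eta> (Delta f Q)" and c: "c \<in> fixpts S \<eta> (Delta g P)"
  shows "bmul S \<eta> sm f g P (br S \<eta> sm (Delta f Q) a) (br S \<eta> sm (Delta g P) c)
       = br S \<eta> sm (Delta (f \<circ> g) P) (a * c)"
proof -
  have P: "subgroup P S" "g \<in> hom (S\<lparr>carrier := P\<rparr>) S" and Q: "subgroup Q S" and gP: "g ` P \<subseteq> Q"
    using g by (auto simp: subgroup_iso_def bij_betw_def)
  obtain k where k: "k \<in> bker S \<eta> sm (Delta f Q)" "(SOME x. x \<in> br S \<eta> sm (Delta f Q) a) = a + k"
    using some_br by blast
  obtain l where l: "l \<in> bker S \<eta> sm (Delta g P)" "(SOME x. x \<in> br S \<eta> sm (Delta g P) c) = c + l"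
    using some_br by blast
  have "c + l \<in> fixpts S \<eta> (Delta g P)"
    using fixpts_add[OF c] bker_subset_fixpts[OF Delta_subgroup[OF P]] l(1) by blast
  then have "a * l + k * (c + l) \<in> bker S \<eta> sm (Delta (f \<circ> g) P)"
    by (intro bker.add bker_mult_left[OF P Q f gP a l(1)] bker_mult_right[OF g f _ k(1)])
  moreover have "(a + k) * (c + l) - a * c = a * l + k * (c + l)" by (simp add: algebra_simps)
  ultimately show ?thesis unfolding bmul_def k(2) l(2) by (simp add: br_eq_iff)
qed

lemma twisted_unit_iff:
  assumes \<phi>: "subgroup_iso S P Q \<phi>"
  shows "twisted_unit S \<eta> sm P \<phi> u \<longleftrightarrow>
    (\<exists>c c'. c \<in> fixpts S \<eta> (Delta \<phi> P) \<and> c' \<in> fixpts S \<eta> (Delta (inv_into P \<phi>) Q)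
       \<and> u = br S \<eta> sm (Delta \<phi> P) c \<and> c' * c - 1 \<in> bker S \<eta> sm (Delta id P))"
proof -
  have Q: "\<phi> ` P = Q" using \<phi> by (simp add: subgroup_iso_def bij_betw_def)
  have \<phi>': "inv_into P \<phi> \<in> hom (S\<lparr>carrier := Q\<rparr>) S"
    using subgroup_iso_inv[OF \<phi>] by (simp add: subgroup_iso_def)
  have inverse: "bmul S \<eta> sm (inv_into P \<phi>) \<phi> P (br S \<eta> sm (Delta (inv_into P \<phi>) Q) c')
      (br S \<eta> sm (Delta \<phi> P) c) = bone S \<eta> sm P \<longleftrightarrow> c' * c - 1 \<in> bker S \<eta> sm (Delta id P)"
    if "c \<in> fixpts S \<eta> (Delta \<phi> P)" "c' \<in> fixpts S \<eta> (Delta (inv_into P \<phi>) Q)" for c c'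
    using bmul_br[OF \<phi> \<phi>' that(2,1)] Delta_inv_into_comp[OF \<phi>] by (simp add: bone_def br_eq_iff)
  show ?thesis unfolding twisted_unit_def BQ_def Q using inverse by blast
qed

lemma bker_Delta_id_sandwich:
  assumes \<phi>: "subgroup_iso S P Q \<phi>"
    and c: "c \<in> fixpts S \<eta> (Delta \<phi> P)" and c': "c' \<in> fixpts S \<eta> (Delta (inv_into P \<phi>) Q)"
    and k: "k \<in> bker S \<eta> sm (Delta id Q)"
  shows "c' * k * c \<in> bker S \<eta> sm (Delta id P)"
proof -
  have Q: "subgroup Q S" and \<phi>': "inv_into P \<phi> \<in> hom (S\<lparr>carrier := Q\<rparr>) S"
    using subgroup_iso_inv[OF \<phi>] by (auto simp: subgroup_iso_def)
  have "c' * k \<in> bker S \<eta> sm (Delta (inv_into P \<phi>) Q)"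
    using bker_mult_left[OF Q hom_restrict_id[OF Q] Q \<phi>' _ c' k] by simp
  then show ?thesis using bker_mult_right[OF \<phi> \<phi>' c] Delta_inv_into_comp[OF \<phi>] by simp
qed

end

lemma divisible_imp_interior_algebra: "group S \<Longrightarrow> divisible S \<eta> sm \<Longrightarrow> interior_algebra S \<eta> sm"
  by (simp add: divisible_def bifree_def interior_alg_def interior_algebra_def)

theorem lemma5p3:
  fixes S :: "('g, 'b) monoid_scheme" and \<eta> :: "'g \<Rightarrow> 'a::ring_1"
    and sm :: "'r::idom \<Rightarrow> 'a \<Rightarrow> 'a" and p :: nat
    and P Q R :: "'g set" and \<phi> \<psi> :: "'g \<Rightarrow> 'g" and u\<phi> u\<psi> :: "'a set"
  assumes "CLN_domain p TYPE('r)"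
    and "group S" and "finite (carrier S)" and "\<exists>n. order S = p ^ n"
    and "divisible S \<eta> sm"
    and "Fiso S \<eta> sm P Q \<phi>" and "Fiso S \<eta> sm Q R \<psi>"
    and "twisted_unit S \<eta> sm P \<phi> u\<phi>" and "twisted_unit S \<eta> sm Q \<psi> u\<psi>"
  shows "twisted_unit S \<eta> sm P (\<psi> \<circ> \<phi>) (bmul S \<eta> sm \<psi> \<phi> P u\<psi> u\<phi>)"
proof -
  interpret interior_algebra S \<eta> sm using assms(2,5) by (rule divisible_imp_interior_algebra)
  have \<phi>: "subgroup_iso S P Q \<phi>" and \<psi>: "subgroup_iso S Q R \<psi>"
    using assms(6,7) by (simp_all add: Fiso_imp_subgroup_iso)
  have \<psi>\<phi>: "subgroup_iso S P R (\<psi> \<circ> \<phi>)" using \<phi> \<psi> by (rule subgroup_iso_comp)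
  obtain c c' where c: "c \<in> fixpts S \<eta> (Delta \<phi> P)" "c' \<in> fixpts S \<eta> (Delta (inv_into P \<phi>) Q)"
    "u\<phi> = br S \<eta> sm (Delta \<phi> P) c" "c' * c - 1 \<in> bker S \<eta> sm (Delta id P)"
    using assms(8) twisted_unit_iff[OF \<phi>] by blast
  obtain a a' where a: "a \<in> fixpts S \<eta> (Delta \<psi> Q)" "a' \<in> fixpts S \<eta> (Delta (inv_into Q \<psi>) R)"
    "u\<psi> = br S \<eta> sm (Delta \<psi> Q) a" "a' * a - 1 \<in> bker S \<eta> sm (Delta id Q)"
    using assms(9) twisted_unit_iff[OF \<psi>] by blast
  have Q: "subgroup Q S" "\<psi> \<in> hom (S\<lparr>carrier := Q\<rparr>) S" "inv_into P \<phi> \<in> hom (S\<lparr>carrier := Q\<rparr>) S"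
    and \<phi>P: "\<phi> ` P \<subseteq> Q" and \<psi>'R: "inv_into Q \<psi> ` R \<subseteq> Q"
    using \<phi> \<psi> subgroup_iso_inv[OF \<phi>] subgroup_iso_inv[OF \<psi>] by (auto simp: subgroup_iso_def bij_betw_def)
  have "c' * a' \<in> fixpts S \<eta> (Delta (inv_into P (\<psi> \<circ> \<phi>)) R)"
    using fixpts_Delta_mult[OF Q(1,3) c(2) a(2) \<psi>'R] Delta_inv_into_comp_distrib[OF \<phi> \<psi>] by simp
  moreover have "a * c \<in> fixpts S \<eta> (Delta (\<psi> \<circ> \<phi>) P)" using Q(1,2) a(1) c(1) \<phi>P by (rule fixpts_Delta_mult)
  moreover have "c' * (a' * a - 1) * c + (c' * c - 1) \<in> bker S \<eta> sm (Delta id P)"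
    using bker_Delta_id_sandwich[OF \<phi> c(1,2) a(4)] c(4) by (rule bker.add)
  then have "(c' * a') * (a * c) - 1 \<in> bker S \<eta> sm (Delta id P)" by (simp add: algebra_simps)
  ultimately show ?thesis
    unfolding twisted_unit_iff[OF \<psi>\<phi>] a(3) c(3) bmul_br[OF \<phi> Q(2) a(1) c(1)] by blast
qed

end
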